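(* Let $C,A_1,\dots,A_M$ be real symmetric $N\times N$ matrices and $b\in\mathbb{R}^M$ with $\operatorname{Tr}(A_i^TA_j)=0$ for $i\ne j$, $\operatorname{Tr}(A_i^TC)=0$, $\|C\|_F=\|A_i\|_F=1$. Fix $c\in\mathbb{R}$ and let $S_c=\{X\succeq0:\operatorname{Tr}(A_i^TX)=b_i\ \forall i,\ \operatorname{Tr}(C^TX)=c\}$; assume $S_c$ contains a positive definite matrix and let $X_t$ be the (unique) maximizer of $\log\det X$ over $S_c$. Let $X_L\in S_c$, $X_L\succ0$, be $\epsilon_C$-optimal in the sense that $$\epsilon_C\ \ge\ (N-1)\big(\log\det X_t-\log\det X_L\big)\ \ge 0 .$$ Let $U_t,U_L$ be the Cholesky factors of $X_t,X_L$ ($X_t=U_t^TU_t$, $X_L=U_L^TU_L$). Let $K=DD_N$ and $\Phi'=\frac{2}{N+1}$, or $K=SDD_N$ and $\Phi'=1$, and let $0<\Phi<\Phi'$. Define $Q=U_t^{-T}CU_t^{-1}$, $\hat Y=I-\sqrt{\Phi}\,Q/\|Q\|_F$ and $\hat X=U_t^T\hat YU_t$. If $$\epsilon_C\le \epsilon_c^*=-\log\left(1-\left(\frac{\sqrt{\Phi'}-\sqrt{\Phi}}{\sqrt N+\sqrt{\Phi'}}\right)^3\right),$$ then the optimal value of the decrease step taken from $X_L$, $$\min_{X,Y}\operatorname{Tr}(C^TX)\ \text{s.t.}\ \operatorname{Tr}(A_i^TX)=b_i\ (i=1,\dots,M),\ X=U_L^TYU_L,\ Y\in K,$$ is at most $\operatorname{Tr}(C^T\hat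 X)$.
   Context: $X\in DD_N$ (diagonally dominant) means $X$ symmetric with $X(i,i)\ge\sum_{j\ne i}|X(i,j)|$ for all $i$; $X\in SDD_N$ (scaled diagonally dominant) means $X=DYD$ with $D$ positive diagonal and $Y\in DD_N$. Cholesky factor of $X\succ0$: upper-triangular $U$ with $X=U^TU$. *)

theory Defs
  imports "HOL-Analysis.Analysis" "HOL-Library.Extended_Real"
begin


definition sym_mat :: "real^'n^'n \<Rightarrow> bool" where
  "sym_mat X \<longleftrightarrow> transpose X = X"

definition psd :: "real^'n^'n \<Rightarrow> bool" where
  "psd X \<longleftrightarrow> sym_mat X \<and> (\<forall>v. 0 \<le> v \<bullet> (X *v v))"

definition pd :: "real^'n^'n \<Rightarrow> bool" where
  "pd X \<longleftrightarrow> sym_mat X \<and> (\<forall>v. v \<noteq> 0 \<longrightarrow> 0 < v \<bullet> (X *v v))"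

definition frob_inner :: "real^'n^'n \<Rightarrow> real^'n^'n \<Rightarrow> real" where
  "frob_inner A X = trace (transpose A ** X)"

definition frob_norm :: "real^'n^'n \<Rightarrow> real" where
  "frob_norm A = sqrt (frob_inner A A)"

definition DD :: "(real^'n^'n) set" where
  "DD = {X. sym_mat X \<and> (\<forall>i. (\<Sum>j\<in>UNIV - {i}. \<bar>X$i$j\<bar>) \<le> X$i$i)}"

definition pos_diag :: "real^'n^'n \<Rightarrow> bool" where
  "pos_diag D \<longleftrightarrow> (\<forall>i j. i \<noteq> j \<longrightarrow> D$i$j = 0) \<and> (\<forall>i. 0 < D$i$i)"

definition SDD :: "(real^'n^'n) set" where
  "SDD = {X. \<exists>D Y. pos_diag D \<and> Y \<in> DD \<and> X = D ** Y ** D}"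

definition upper_tri :: "real^('n::{finite,linorder})^('n::{finite,linorder}) \<Rightarrow> bool" where
  "upper_tri U \<longleftrightarrow> (\<forall>i j. j < i \<longrightarrow> U$i$j = 0)"

definition cholesky_factor :: "real^('n::{finite,linorder})^('n::{finite,linorder}) \<Rightarrow> real^('n::{finite,linorder})^('n::{finite,linorder}) \<Rightarrow> bool" where
  "cholesky_factor U X \<longleftrightarrow> upper_tri U \<and> X = transpose U ** U"

definition S_set :: "nat \<Rightarrow> (nat \<Rightarrow> real^'n^'n) \<Rightarrow> (nat \<Rightarrow> real) \<Rightarrow> real^'n^'n \<Rightarrow> real \<Rightarrow> (real^'n^'n) set" where
  "S_set M A b C c = {X. psd X \<and> (\<forall>i<M. frob_inner (A i) X = b i) \<and> frob_inner C X = c}"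

end

theory Submission
  imports Defs
begin

(* Write X_t = U_L^T W U_L and let mu_i be the eigenvalues of the positive definite matrix W.
   Maximality of log det at X_t along the line through X_L gives the first-order condition
   sum_i (1 - mu_i) / mu_i = 0, and log det X_t - log det X_L = sum_i ln mu_i. Since
   ln m - (m - 1) / m >= (m - 1)^2 / 6 near m = 1, the eps_C-optimality of X_L forces
   ||W - I||_F (1 + sqrt Phi) < sqrt Phi' - sqrt Phi.
   The point Xhat = X_t - a C, a = sqrt Phi / ||Q||_F, satisfies the linear constraints because
   every A_i is orthogonal to C, and Xhat = U_L^T Z U_L with Z = G^T (I - a Q) G, G = U_t U_L^-1,
   G^T G = W. As ||G^T Q G||_F <= (1 + ||W - I||_F) ||Q||_F, this gives ||Z - I||_F < sqrt Phi'.
   Finally, a symmetric matrix within Frobenius distance sqrt (2 / (N + 1)) of I is diagonally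
   dominant, and one within distance 1 is scaled diagonally dominant (its comparison matrix is a
   nonsingular M-matrix, which supplies the positive scaling). *)

lemma frob_inner_eq_inner: "frob_inner (A::real^'n^'n) B = A \<bullet> B"
proof -
  have "frob_inner A B = (\<Sum>i\<in>UNIV. \<Sum>k\<in>UNIV. A $ k $ i * B $ k $ i)"
    unfolding frob_inner_def trace_def by (simp add: matrix_matrix_mult_def transpose_def)
  also have "\<dots> = A \<bullet> B" by (subst sum.swap) (simp add: inner_vec_def)
  finally show ?thesis .
qed

lemma frob_norm_eq_norm: "frob_norm (A::real^'n^'n) = norm A"
  unfolding frob_norm_def frob_inner_eq_inner by (simp add: norm_eq_sqrt_inner)

lemma norm_vec_sq: "(norm (x::'a::real_normed_vector^'n))\<^sup>2 = (\<Sum>i\<in>UNIV. (norm (x$i))\<^sup>2)"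
  by (simp add: norm_vec_def L2_set_def sum_nonneg)

lemma norm_matrix_sq: "(norm (A::real^'n^'m))\<^sup>2 = (\<Sum>i\<in>UNIV. \<Sum>j\<in>UNIV. (A$i$j)\<^sup>2)"
  by (simp add: norm_vec_sq)

lemma matrix_add_rdistrib: "((A::real^'n^'m) + B) ** C = A ** C + B ** C"
  by (simp add: matrix_matrix_mult_def vec_eq_iff sum.distrib algebra_simps)

lemma matrix_diff_ldistrib: "(A::real^'n^'m) ** (B - C) = A ** B - A ** C"
  by (simp add: matrix_matrix_mult_def vec_eq_iff sum_subtractf algebra_simps)

lemma matrix_diff_rdistrib: "((A::real^'n^'m) - B) ** C = A ** C - B ** C"
  by (simp add: matrix_matrix_mult_def vec_eq_iff sum_subtractf algebra_simps)

lemma transpose_add: "transpose (A + B) = transpose A + transpose (B::real^'n^'m)"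
  by (simp add: transpose_def vec_eq_iff)

lemma transpose_diff: "transpose (A - B) = transpose A - transpose (B::real^'n^'m)"
  by (simp add: transpose_def vec_eq_iff)

lemmas matrix_linear_simps =
  matrix_add_ldistrib matrix_add_rdistrib matrix_diff_ldistrib matrix_diff_rdistrib
  matrix_scalar_ac scalar_matrix_assoc[symmetric] transpose_add transpose_diff transpose_scalar

lemma matrix_inv_inverse:
  fixes U :: "real^'n^'n"
  assumes "invertible U"
  shows matrix_inv_right: "U ** matrix_inv U = mat 1" and matrix_inv_left: "matrix_inv U ** U = mat 1"
proof -
  have "\<exists>U'. U ** U' = mat 1 \<and> U' ** U = mat 1" using assms unfolding invertible_def by blast
  then have "U ** matrix_inv U = mat 1 \<and> matrix_inv U ** U = mat 1"
    unfolding matrix_inv_def by (rule someI_ex)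
  then show "U ** matrix_inv U = mat 1" "matrix_inv U ** U = mat 1" by auto
qed

lemma congruence_matrix_inv_cancel:
  fixes U P :: "real^'n^'n"
  assumes "invertible U"
  shows "transpose U ** (transpose (matrix_inv U) ** P ** matrix_inv U) ** U = P"
proof -
  have "transpose U ** transpose (matrix_inv U) = mat 1"
    using matrix_inv_left[OF assms] by (metis matrix_transpose_mul transpose_mat)
  moreover have "transpose U ** (transpose (matrix_inv U) ** P ** matrix_inv U) ** U
      = (transpose U ** transpose (matrix_inv U)) ** P ** (matrix_inv U ** U)"
    by (simp add: matrix_mul_assoc)
  ultimately show ?thesis by (simp add: matrix_inv_left[OF assms])
qed

lemma congruence_change_of_factor:
  fixes U V Y :: "real^'n^'n"
  assumes "invertible V"
  shows "transpose U ** Y ** U = transpose V ** (transpose (U ** matrix_inv V) ** Y ** (U ** matrix_inv V)) ** V"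
  using congruence_matrix_inv_cancel[OF assms, of "transpose U ** Y ** U"]
  by (simp add: matrix_transpose_mul matrix_mul_assoc)

lemma invertible_matrix_inv: "invertible (U::real^'n^'n) \<Longrightarrow> invertible (matrix_inv U)"
  using matrix_inv_left matrix_inv_right unfolding invertible_def by blast

lemma inner_congruence:
  fixes U P :: "real^'n^'n"
  shows "w \<bullet> ((transpose U ** P ** U) *v w) = (U *v w) \<bullet> (P *v (U *v w))"
proof -
  have "(transpose U ** P ** U) *v w = transpose U *v (P *v (U *v w))"
    by (simp add: matrix_vector_mul_assoc matrix_mul_assoc)
  then have "w \<bullet> ((transpose U ** P ** U) *v w) = (w v* transpose U) \<bullet> (P *v (U *v w))"
    by (simp only: dot_lmul_matrix)
  then show ?thesis by simp
qed

lemma sym_mat_congruence: "sym_mat P \<Longrightarrow> sym_mat (transpose U ** P ** U)"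
  unfolding sym_mat_def by (simp add: matrix_transpose_mul matrix_mul_assoc)

lemma sym_mat_inner: "sym_mat A \<Longrightarrow> (A *v x) \<bullet> y = x \<bullet> (A *v y)"
  unfolding sym_mat_def by (metis dot_lmul_matrix transpose_matrix_vector)

lemma pd_imp_psd: "pd X \<Longrightarrow> psd X"
  unfolding pd_def psd_def by (metis inner_zero_left order_refl less_imp_le)

lemma pd_mat_1: "pd (mat 1 :: real^'n^'n)"
  unfolding pd_def sym_mat_def by simp

lemma pd_congruence:
  fixes U P :: "real^'n^'n"
  assumes "invertible U" "pd P"
  shows "pd (transpose U ** P ** U)"
  unfolding pd_def
proof (intro conjI allI impI)
  show "sym_mat (transpose U ** P ** U)" using assms(2) by (simp add: pd_def sym_mat_congruence)
  fix v :: "real^'n" assume "v \<noteq> 0"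
  then have "U *v v \<noteq> 0" using inj_matrix_vector_mult[OF assms(1)] by (metis injD matrix_vector_mult_0_right)
  then show "0 < v \<bullet> ((transpose U ** P ** U) *v v)"
    using assms(2) by (simp add: pd_def inner_congruence)
qed

lemma invertible_if_pd_gram:
  fixes U :: "real^'n^'n"
  assumes "pd (transpose U ** U)"
  shows "invertible U"
proof -
  have "U *v v \<noteq> 0" if "v \<noteq> 0" for v
    using assms that inner_congruence[of v U "mat 1"] unfolding pd_def by fastforce
  then have "inj ((*v) U)"
    by (intro injI) (metis eq_iff_diff_eq_0 matrix_vector_mult_diff_distrib)
  then show ?thesis
    by (metis matrix_left_invertible_injective invertible_left_inverse)
qed

lemma det_gram_pos:
  fixes U :: "real^'n^'n"
  assumes "invertible U"
  shows "0 < det (transpose U ** U)"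
  using invertible_det_nz[of U] assms
  by (simp add: det_mul) (metis not_real_square_gt_zero)

section \<open>Spectral theorem for real symmetric matrices\<close>

definition diagm :: "('n \<Rightarrow> real) \<Rightarrow> real^'n^'n" where
  "diagm d = (\<chi> i j. if i = j then d i else 0)"

lemma vanishing_linear_term:
  fixes a c :: real
  assumes "\<forall>t. 2 * t * a + t\<^sup>2 * c \<le> 0"
  shows "a = 0"
proof (rule ccontr)
  assume "a \<noteq> 0"
  define t where "t = a / (\<bar>c\<bar> + 1)"
  have "0 < a * a" using \<open>a \<noteq> 0\<close> by (metis not_real_square_gt_zero)
  then have ta: "0 < t * a" unfolding t_def by simp
  have "- (\<bar>c\<bar> + 1) \<le> c" using abs_ge_minus_self[of c] by linarith
  then have "t\<^sup>2 * - (\<bar>c\<bar> + 1) \<le> t\<^sup>2 * c" by (intro mult_left_mono) auto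
  moreover have ta_eq: "t * (\<bar>c\<bar> + 1) = a"
    using abs_ge_zero[of c] unfolding t_def by simp
  then have "t\<^sup>2 * - (\<bar>c\<bar> + 1) = - (t * a)"
    by (simp only: power2_eq_square mult_minus_right mult.assoc ta_eq)
  moreover have "2 * t * a = 2 * (t * a)" by simp
  ultimately show False using assms[rule_format, of t] ta by linarith
qed

lemma rayleigh_quotient_max_exists:
  fixes A :: "real^'n^'n"
  assumes S: "subspace S" and ne: "S \<noteq> {0}"
  obtains v where "v \<in> S" "norm v = 1" "\<And>y. y \<in> S \<Longrightarrow> y \<bullet> (A *v y) \<le> (v \<bullet> (A *v v)) * (norm y)\<^sup>2"
proof -
  define K where "K = S \<inter> sphere 0 1"
  have "compact K" unfolding K_def
    by (simp add: S closed_subspace compact_Int_closed Int_commute compact_sphere closed_Int_compact)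
  obtain x where x: "x \<in> S" "x \<noteq> 0" using ne S subspace_0 by blast
  then have "x /\<^sub>R norm x \<in> K" unfolding K_def using S by (simp add: subspace_scale)
  then have "K \<noteq> {}" by blast
  have "continuous_on K (\<lambda>y. y \<bullet> (A *v y))"
    by (intro continuous_intros linear_continuous_on matrix_vector_mul_bounded_linear)
  then obtain v where v: "v \<in> K" and vmax: "\<forall>y\<in>K. y \<bullet> (A *v y) \<le> v \<bullet> (A *v v)"
    using continuous_attains_sup[OF \<open>compact K\<close> \<open>K \<noteq> {}\<close>] by blast
  have bound: "y \<bullet> (A *v y) \<le> (v \<bullet> (A *v v)) * (norm y)\<^sup>2" if "y \<in> S" for y
  proof (cases "y = 0")
    case False
    have "y /\<^sub>R norm y \<in> K" unfolding K_def using that False S by (simp add: subspace_scale)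
    then have "(y /\<^sub>R norm y) \<bullet> (A *v (y /\<^sub>R norm y)) \<le> v \<bullet> (A *v v)" using vmax by blast
    then have "(y \<bullet> (A *v y)) / (norm y)\<^sup>2 \<le> v \<bullet> (A *v v)"
      by (simp add: matrix_vector_mult_scaleR power2_eq_square divide_simps)
    then show ?thesis using False by (simp add: divide_le_eq mult.commute)
  qed simp
  show thesis using v bound unfolding K_def by (intro that) auto
qed

text \<open>The maximiser of the Rayleigh quotient on an invariant subspace is an eigenvector: for
  \<open>w = A v - l v\<close> the quotient along \<open>v + t w\<close> has vanishing first variation, which forces
  \<open>w \<bullet> A v = \<parallel>w\<parallel>\<^sup>2\<close> to vanish.\<close>

lemma sym_mat_eigenvector_in_invariant_subspace:
  fixes A :: "real^'n^'n"
  assumes sym: "sym_mat A" and S: "subspace S" and ne: "S \<noteq> {0}"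
    and inv: "\<forall>x\<in>S. A *v x \<in> S"
  obtains v l where "v \<in> S" "norm v = 1" "A *v v = l *\<^sub>R v"
proof -
  obtain v where vS: "v \<in> S" and nv: "norm v = 1"
    and bound: "\<And>y. y \<in> S \<Longrightarrow> y \<bullet> (A *v y) \<le> (v \<bullet> (A *v v)) * (norm y)\<^sup>2"
    using rayleigh_quotient_max_exists[OF S ne] by blast
  define l where "l = v \<bullet> (A *v v)"
  define w where "w = A *v v - l *\<^sub>R v"
  have vv: "v \<bullet> v = 1" using nv by (simp add: dot_square_norm)
  have wS: "w \<in> S" unfolding w_def using inv vS S by (simp add: subspace_diff subspace_scale)
  have wv: "w \<bullet> v = 0"
    unfolding w_def l_def by (simp add: inner_diff_left vv inner_commute[of "A *v v" v])
  have "2 * t * (w \<bullet> (A *v v)) + t\<^sup>2 * (w \<bullet> (A *v w) - l * (norm w)\<^sup>2) \<le> 0" for t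
  proof -
    have "v + t *\<^sub>R w \<in> S" using vS wS S by (simp add: subspace_add subspace_scale)
    then have "(v + t *\<^sub>R w) \<bullet> (A *v (v + t *\<^sub>R w)) \<le> l * (norm (v + t *\<^sub>R w))\<^sup>2"
      unfolding l_def by (rule bound)
    moreover have "(v + t *\<^sub>R w) \<bullet> (A *v (v + t *\<^sub>R w))
        = l + 2 * t * (w \<bullet> (A *v v)) + t\<^sup>2 * (w \<bullet> (A *v w))"
      using sym_mat_inner[OF sym, of v w] inner_commute[of "A *v v" w]
      by (simp add: matrix_vector_right_distrib matrix_vector_mult_scaleR inner_add_left inner_add_right
          l_def power2_eq_square algebra_simps inner_commute[of "A *v w" v] inner_commute[of v "A *v v"])
    moreover have "(norm (v + t *\<^sub>R w))\<^sup>2 = 1 + t\<^sup>2 * (norm w)\<^sup>2"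
    proof -
      have "(norm (v + t *\<^sub>R w))\<^sup>2 = (v + t *\<^sub>R w) \<bullet> (v + t *\<^sub>R w)"
        by (rule power2_norm_eq_inner)
      also have "\<dots> = v \<bullet> v + 2 * t * (w \<bullet> v) + t\<^sup>2 * (w \<bullet> w)"
        by (simp add: inner_add_left inner_add_right inner_commute[of v w] power2_eq_square algebra_simps)
      finally show ?thesis using vv wv by (simp add: dot_square_norm)
    qed
    ultimately show ?thesis by (simp add: algebra_simps)
  qed
  then have "w \<bullet> (A *v v) = 0" by (intro vanishing_linear_term) blast
  moreover have "A *v v = w + l *\<^sub>R v" unfolding w_def by simp
  then have "w \<bullet> (A *v v) = w \<bullet> w" using wv by (simp add: inner_add_right inner_commute[of w v])
  ultimately have "w = 0" by simp
  then have "A *v v = l *\<^sub>R v" unfolding w_def by simp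
  with vS nv show thesis by (rule that)
qed

lemma sym_mat_invariant_orthogonal_complement:
  fixes A :: "real^'n^'n"
  assumes sym: "sym_mat A" and S: "subspace S" "\<forall>x\<in>S. A *v x \<in> S" and v: "A *v v = l *\<^sub>R v"
  shows "subspace (S \<inter> {x. v \<bullet> x = 0})" and "\<forall>x\<in>S \<inter> {x. v \<bullet> x = 0}. A *v x \<in> S \<inter> {x. v \<bullet> x = 0}"
proof -
  show "subspace (S \<inter> {x. v \<bullet> x = 0})"
    using S(1) subspace_orthogonal_to_vector[of v] unfolding orthogonal_def by (simp add: subspace_inter)
  have "v \<bullet> (A *v x) = l * (v \<bullet> x)" for x
    using sym_mat_inner[OF sym, of v x] v by simp
  then show "\<forall>x\<in>S \<inter> {x. v \<bullet> x = 0}. A *v x \<in> S \<inter> {x. v \<bullet> x = 0}" using S(2) by auto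
qed

lemma sym_mat_orthonormal_eigenbasis:
  fixes A :: "real^'n^'n"
  assumes sym: "sym_mat A"
  shows "subspace S \<Longrightarrow> (\<forall>x\<in>S. A *v x \<in> S) \<Longrightarrow> \<exists>B. B \<subseteq> S \<and> pairwise orthogonal B \<and>
    (\<forall>b\<in>B. norm b = 1 \<and> (\<exists>l. A *v b = l *\<^sub>R b)) \<and> S \<subseteq> span B"
proof (induction "dim S" arbitrary: S rule: less_induct)
  case less
  show ?case
  proof (cases "S = {0}")
    case True
    then show ?thesis by (intro exI[of _ "{}"]) auto
  next
    case False
    obtain v l where v: "v \<in> S" "norm v = 1" "A *v v = l *\<^sub>R v"
      using sym_mat_eigenvector_in_invariant_subspace[OF sym less.prems(1) False less.prems(2)] .
    define S' where "S' = S \<inter> {x. v \<bullet> x = 0}"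
    note sub' = sym_mat_invariant_orthogonal_complement(1)[OF sym less.prems v(3), folded S'_def]
    note inv' = sym_mat_invariant_orthogonal_complement(2)[OF sym less.prems v(3), folded S'_def]
    have "v \<notin> S'" using v(2) unfolding S'_def by (auto simp: dot_square_norm)
    then have "S' \<subset> S" using v(1) S'_def by blast
    moreover have e: "span S' = S'" "span S = S" using sub' less.prems(1) by (simp_all add: span_eq_iff)
    ultimately have "dim S' < dim S" using dim_psubset[of S' S] unfolding e by blast
    then obtain B where B: "B \<subseteq> S'" "pairwise orthogonal B"
        "\<forall>b\<in>B. norm b = 1 \<and> (\<exists>l. A *v b = l *\<^sub>R b)" "S' \<subseteq> span B"
      using less.hyps[OF _ sub' inv'] by blast
    show ?thesis
    proof (intro exI[of _ "insert v B"] conjI)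
      show "insert v B \<subseteq> S" using B(1) v(1) unfolding S'_def by auto
      show "pairwise orthogonal (insert v B)"
        using B(1,2) unfolding S'_def pairwise_insert orthogonal_def by (auto simp: inner_commute)
      show "\<forall>b\<in>insert v B. norm b = 1 \<and> (\<exists>l. A *v b = l *\<^sub>R b)" using B(3) v by auto
      show "S \<subseteq> span (insert v B)"
      proof
        fix x assume x: "x \<in> S"
        have "x - (v \<bullet> x) *\<^sub>R v \<in> S'" unfolding S'_def
          using x v less.prems(1) by (auto simp: subspace_diff subspace_scale inner_diff_right dot_square_norm)
        then have "x - (v \<bullet> x) *\<^sub>R v \<in> span (insert v B)" using B(4) span_mono[of B "insert v B"] by auto
        moreover have "(v \<bullet> x) *\<^sub>R v \<in> span (insert v B)" by (simp add: span_base span_mul)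
        ultimately have "(x - (v \<bullet> x) *\<^sub>R v) + (v \<bullet> x) *\<^sub>R v \<in> span (insert v B)" by (rule span_add)
        then show "x \<in> span (insert v B)" by simp
      qed
    qed
  qed
qed

lemma matrix_mult_eigenvector_columns:
  fixes A V :: "real^'n^'n"
  assumes "\<And>j. A *v column j V = \<mu> j *\<^sub>R column j V"
  shows "A ** V = V ** diagm \<mu>"
proof -
  have "(A ** V) $ i $ j = (V ** diagm \<mu>) $ i $ j" for i j
  proof -
    have "(A ** V) $ i $ j = \<mu> j * V $ i $ j"
      using assms[of j] by (simp add: matrix_matrix_mult_def matrix_vector_mult_def column_def vec_eq_iff)
    also have "\<dots> = (\<Sum>k\<in>UNIV. V $ i $ k * (if k = j then \<mu> k else 0))"
      by (simp add: if_distrib cong: if_cong)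
    finally show ?thesis unfolding diagm_def by (simp add: matrix_matrix_mult_def)
  qed
  then show ?thesis by (simp add: vec_eq_iff)
qed

theorem sym_mat_orthogonally_diagonalizable:
  fixes A :: "real^'n^'n"
  assumes sym: "sym_mat A"
  obtains V \<mu> where "orthogonal_matrix V" "A = V ** diagm \<mu> ** transpose V"
proof -
  obtain B where B: "pairwise orthogonal B" "\<forall>b\<in>B. norm b = 1 \<and> (\<exists>l. A *v b = l *\<^sub>R b)" "UNIV \<subseteq> span B"
    using sym_mat_orthonormal_eigenbasis[OF sym, of UNIV] by auto
  have "independent B" using B(1,2) pairwise_orthogonal_independent by fastforce
  then have "finite B" "card B = CARD('n)"
    using B(3) independent_imp_finite basis_card_eq_dim[of B UNIV] by auto
  then obtain f where f: "bij_betw f (UNIV::'n set) B"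
    using finite_same_card_bij[of "UNIV::'n set" B] by auto
  then have fB: "f i \<in> B" and finj: "f i = f j \<Longrightarrow> i = j" for i j
    by (auto simp: bij_betw_def inj_on_def)
  have "\<forall>i. \<exists>l. A *v f i = l *\<^sub>R f i" using B(2) fB by blast
  then obtain \<mu> where \<mu>: "\<And>i. A *v f i = \<mu> i *\<^sub>R f i" by metis
  define V where "V = (\<chi> i j. f j $ i)"
  have col: "column j V = f j" for j unfolding V_def column_def by (simp add: vec_eq_iff)
  have "norm (f i) = 1" for i using B(2) fB by blast
  moreover have "orthogonal (f i) (f j)" if "i \<noteq> j" for i j
    using B(1) fB finj that unfolding pairwise_def by blast
  ultimately have oV: "orthogonal_matrix V"
    unfolding orthogonal_matrix_orthonormal_columns col by blast
  have "A ** V = V ** diagm \<mu>" using \<mu> by (intro matrix_mult_eigenvector_columns) (simp add: col)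
  then have "A ** (V ** transpose V) = V ** diagm \<mu> ** transpose V" by (simp add: matrix_mul_assoc)
  then have "A = V ** diagm \<mu> ** transpose V" using oV unfolding orthogonal_matrix_def by simp
  with oV show thesis by (rule that)
qed

lemma diagm_mult_vec: "diagm d *v w = (\<chi> i. d i * w$i)"
  by (simp add: vec_eq_iff matrix_vector_mult_def diagm_def if_distrib if_distribR cong: if_cong)

lemma inner_diagm: "w \<bullet> (diagm d *v w) = (\<Sum>i\<in>UNIV. d i * (w$i)\<^sup>2)"
  by (simp add: diagm_mult_vec inner_vec_def power2_eq_square mult.commute mult.left_commute)

lemma diagm_affine: "diagm (\<lambda>i. a * d i + b) = a *\<^sub>R diagm d + b *\<^sub>R mat 1"
  by (simp add: diagm_def mat_def vec_eq_iff)

lemma pd_diagm_iff: "pd (diagm d) \<longleftrightarrow> (\<forall>i. 0 < d i)"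
proof
  assume "pd (diagm d)"
  show "\<forall>i. 0 < d i"
  proof
    fix i
    have "0 < axis i 1 \<bullet> (diagm d *v axis i (1::real))"
      using \<open>pd (diagm d)\<close> unfolding pd_def by (simp add: axis_eq_0_iff)
    then show "0 < d i" by (simp add: diagm_mult_vec axis_def inner_vec_def if_distrib cong: if_cong)
  qed
next
  assume d: "\<forall>i. 0 < d i"
  have "0 < w \<bullet> (diagm d *v w)" if "w \<noteq> 0" for w
  proof -
    obtain i where "w$i \<noteq> 0" using \<open>w \<noteq> 0\<close> by (auto simp: vec_eq_iff)
    then have "0 < d i * (w$i)\<^sup>2" using d by simp
    also have "\<dots> \<le> (\<Sum>j\<in>UNIV. d j * (w$j)\<^sup>2)"
      using d by (intro member_le_sum) (simp_all add: less_imp_le)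
    finally show ?thesis by (simp add: inner_diagm)
  qed
  moreover have "sym_mat (diagm d)" by (simp add: sym_mat_def diagm_def transpose_def vec_eq_iff)
  ultimately show "pd (diagm d)" unfolding pd_def by blast
qed

lemma det_diagm: "det (diagm d) = prod d UNIV"
  by (subst det_diagonal) (auto simp: diagm_def)

lemma norm_diagm_sq: "(norm (diagm d))\<^sup>2 = (\<Sum>i\<in>UNIV. (d i)\<^sup>2)"
  by (simp add: norm_matrix_sq diagm_def if_distrib[of "\<lambda>x. x\<^sup>2"] cong: if_cong)

lemma det_orthogonal_congruence:
  fixes V M :: "real^'n^'n"
  assumes "orthogonal_matrix V"
  shows "det (V ** M ** transpose V) = det M"
proof -
  have "det V * det V = 1"
    using assms det_mul[of "transpose V" V] unfolding orthogonal_matrix_def by (simp add: det_transpose)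
  then show ?thesis by (simp add: det_mul det_transpose)
qed

lemma norm_orthogonal_congruence:
  fixes V M :: "real^'n^'n"
  assumes "orthogonal_matrix V"
  shows "norm (V ** M ** transpose V) = norm M"
proof -
  have VV: "transpose V ** V = mat 1" using assms unfolding orthogonal_matrix_def by simp
  have trace_eq: "trace (V ** N ** transpose V) = trace N" for N :: "real^'n^'n"
    using trace_mul_sym[of "V ** N" "transpose V"] by (simp add: VV matrix_mul_assoc)
  have "transpose (V ** M ** transpose V) ** (V ** M ** transpose V)
      = V ** (transpose M ** (transpose V ** V) ** M) ** transpose V"
    by (simp add: matrix_transpose_mul matrix_mul_assoc)
  then have "frob_inner (V ** M ** transpose V) (V ** M ** transpose V) = frob_inner M M"
    unfolding frob_inner_def by (simp add: trace_eq VV)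
  then show ?thesis by (simp add: frob_inner_eq_inner norm_eq_sqrt_inner)
qed

lemma orthogonal_matrix_invertible: "orthogonal_matrix (V::real^'n^'n) \<Longrightarrow> invertible V"
  unfolding orthogonal_matrix_def invertible_def by blast

lemma pd_orthogonal_diag_iff:
  fixes V :: "real^'n^'n"
  assumes "orthogonal_matrix V"
  shows "pd (V ** diagm d ** transpose V) \<longleftrightarrow> (\<forall>i. 0 < d i)"
proof
  assume "pd (V ** diagm d ** transpose V)"
  then have "pd (transpose V ** (V ** diagm d ** transpose V) ** V)"
    using assms by (intro pd_congruence orthogonal_matrix_invertible)
  also have "transpose V ** (V ** diagm d ** transpose V) ** V
      = (transpose V ** V) ** diagm d ** (transpose V ** V)" by (simp add: matrix_mul_assoc)
  also have "\<dots> = diagm d" using assms unfolding orthogonal_matrix_def by simp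
  finally show "\<forall>i. 0 < d i" by (simp add: pd_diagm_iff)
next
  assume "\<forall>i. 0 < d i"
  then have "pd (transpose (transpose V) ** diagm d ** transpose V)"
    using assms by (intro pd_congruence orthogonal_matrix_invertible) (simp_all add: pd_diagm_iff)
  then show "pd (V ** diagm d ** transpose V)" by simp
qed

lemma ln_det_congruence_diag:
  fixes U V :: "real^'n^'n"
  assumes "orthogonal_matrix V" "invertible U" "\<And>i. 0 < d i"
  shows "ln (det (transpose U ** (V ** diagm d ** transpose V) ** U))
         = (\<Sum>i\<in>UNIV. ln (d i)) + ln (det (transpose U ** U))"
proof -
  have "det (transpose U ** (V ** diagm d ** transpose V) ** U) = prod d UNIV * det (transpose U ** U)"
    using det_orthogonal_congruence[OF assms(1)] by (simp add: det_mul det_diagm)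
  moreover have "d i \<noteq> 0" for i using assms(3)[of i] by simp
  then have "ln (prod d UNIV) = (\<Sum>i\<in>UNIV. ln (d i))" by (intro ln_prod) auto
  moreover have "0 < prod d UNIV" using assms(3) by (simp add: prod_pos)
  ultimately show ?thesis using ln_mult_pos[OF _ det_gram_pos[OF assms(2)]] by simp
qed

section \<open>Frobenius norm estimates\<close>

lemma norm_matrix_vector_mult_le: "norm ((B::real^'n^'m) *v v) \<le> norm B * norm v"
proof -
  have "(norm (B *v v))\<^sup>2 = (\<Sum>i\<in>UNIV. (B$i \<bullet> v)\<^sup>2)"
    by (simp add: norm_vec_sq matrix_vector_mul_component)
  also have "\<dots> \<le> (\<Sum>i\<in>UNIV. (norm (B$i))\<^sup>2 * (norm v)\<^sup>2)"
  proof (rule sum_mono)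
    fix i
    have "\<bar>B$i \<bullet> v\<bar>\<^sup>2 \<le> (norm (B$i) * norm v)\<^sup>2" by (intro power_mono Cauchy_Schwarz_ineq2) auto
    then show "(B$i \<bullet> v)\<^sup>2 \<le> (norm (B$i))\<^sup>2 * (norm v)\<^sup>2" by (simp add: power_mult_distrib)
  qed
  also have "\<dots> = (norm B * norm v)\<^sup>2"
    by (simp add: norm_vec_sq[of B] sum_distrib_right power_mult_distrib)
  finally show ?thesis by (rule power2_le_imp_le) simp
qed

lemma abs_inner_matrix_vector_mult_le: "\<bar>v \<bullet> ((B::real^'n^'n) *v v)\<bar> \<le> norm B * (norm v)\<^sup>2"
proof -
  have "\<bar>v \<bullet> (B *v v)\<bar> \<le> norm v * norm (B *v v)" by (rule Cauchy_Schwarz_ineq2)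
  also have "\<dots> \<le> norm v * (norm B * norm v)" by (intro mult_left_mono norm_matrix_vector_mult_le) simp
  finally show ?thesis by (simp add: power2_eq_square algebra_simps)
qed

lemma norm_matrix_vector_mult_sq_le_gram:
  fixes G :: "real^'n^'n"
  shows "(norm (G *v v))\<^sup>2 \<le> (1 + norm (transpose G ** G - mat 1)) * (norm v)\<^sup>2"
proof -
  have "(norm (G *v v))\<^sup>2 = v \<bullet> v + v \<bullet> ((transpose G ** G - mat 1) *v v)"
    using inner_congruence[of v G "mat 1"]
    by (simp add: power2_norm_eq_inner matrix_vector_mult_diff_rdistrib inner_diff_right)
  also have "\<dots> \<le> (norm v)\<^sup>2 + norm (transpose G ** G - mat 1) * (norm v)\<^sup>2"
    using abs_inner_matrix_vector_mult_le[of v "transpose G ** G - mat 1"]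
    by (simp add: power2_norm_eq_inner)
  finally show ?thesis by (simp add: algebra_simps)
qed

text \<open>A bound on \<open>\<parallel>G v\<parallel>\<close> transfers to \<open>\<parallel>x\<^sup>T G\<parallel>\<close>: with \<open>y = x\<^sup>T G\<close>, Cauchy-Schwarz gives
  \<open>\<parallel>y\<parallel>\<^sup>2 = x \<bullet> G y \<le> \<parallel>x\<parallel> \<parallel>G y\<parallel>\<close>.\<close>

lemma norm_vector_matrix_mult_sq_le:
  fixes G :: "real^'n^'n"
  assumes k: "\<And>v. (norm (G *v v))\<^sup>2 \<le> k * (norm v)\<^sup>2" and "0 \<le> k"
  shows "(norm (x v* G))\<^sup>2 \<le> k * (norm x)\<^sup>2"
proof (cases "x v* G = 0")
  case False
  define y where "y = x v* G"
  have "(norm y)\<^sup>2 = x \<bullet> (G *v y)" unfolding y_def by (simp add: power2_norm_eq_inner dot_lmul_matrix)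
  also have "\<dots> \<le> norm x * norm (G *v y)" by (rule norm_cauchy_schwarz)
  finally have "((norm y)\<^sup>2)\<^sup>2 \<le> (norm x)\<^sup>2 * (norm (G *v y))\<^sup>2"
    by (metis power_mono power_mult_distrib zero_le_power2)
  also have "\<dots> \<le> (norm x)\<^sup>2 * (k * (norm y)\<^sup>2)" using k by (intro mult_left_mono) auto
  finally have "(norm y)\<^sup>2 * (norm y)\<^sup>2 \<le> (k * (norm x)\<^sup>2) * (norm y)\<^sup>2"
    by (simp add: power2_eq_square algebra_simps)
  moreover have "0 < (norm y)\<^sup>2" using False unfolding y_def by simp
  ultimately show ?thesis unfolding y_def by (rule mult_right_le_imp_le)
qed (use \<open>0 \<le> k\<close> in simp)

lemma norm_matrix_mult_sq_le:
  fixes B G :: "real^'n^'n"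
  assumes "\<And>x. (norm (x v* G))\<^sup>2 \<le> k * (norm x)\<^sup>2"
  shows "(norm (B ** G))\<^sup>2 \<le> k * (norm B)\<^sup>2"
proof -
  have "(norm (B ** G))\<^sup>2 = (\<Sum>i\<in>UNIV. (norm (B$i v* G))\<^sup>2)"
    by (simp add: norm_vec_sq matrix_matrix_mult_def vector_matrix_mult_def)
  also have "\<dots> \<le> (\<Sum>i\<in>UNIV. k * (norm (B$i))\<^sup>2)" using assms by (intro sum_mono) auto
  also have "\<dots> = k * (norm B)\<^sup>2" by (simp add: norm_vec_sq[of B] sum_distrib_left)
  finally show ?thesis .
qed

lemma norm_transpose: "norm (transpose (A::real^'n^'m)) = norm A"
proof -
  have "(norm (transpose A))\<^sup>2 = (norm A)\<^sup>2"
    by (simp add: norm_matrix_sq transpose_def) (rule sum.swap)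
  then show ?thesis by (simp add: power2_eq_iff_nonneg)
qed

lemma norm_congruence_le:
  fixes G Q :: "real^'n^'n"
  assumes k: "\<And>v. (norm (G *v v))\<^sup>2 \<le> k * (norm v)\<^sup>2" and "0 \<le> k"
  shows "norm (transpose G ** Q ** G) \<le> k * norm Q"
proof -
  have kx: "(norm (x v* G))\<^sup>2 \<le> k * (norm x)\<^sup>2" for x
    by (rule norm_vector_matrix_mult_sq_le[OF k \<open>0 \<le> k\<close>])
  have "(norm (transpose G ** Q ** G))\<^sup>2 \<le> k * (norm (transpose G ** Q))\<^sup>2"
    by (rule norm_matrix_mult_sq_le[OF kx])
  also have "norm (transpose G ** Q) = norm (transpose Q ** G)"
    using norm_transpose[of "transpose G ** Q"] by (simp add: matrix_transpose_mul)
  also have "k * (norm (transpose Q ** G))\<^sup>2 \<le> k * (k * (norm Q)\<^sup>2)"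
    using norm_matrix_mult_sq_le[OF kx, of "transpose Q"] \<open>0 \<le> k\<close>
    by (intro mult_left_mono) (auto simp: norm_transpose)
  also have "\<dots> = (k * norm Q)\<^sup>2" by (simp add: power2_eq_square)
  finally show ?thesis by (rule power2_le_imp_le) (use \<open>0 \<le> k\<close> in simp)
qed

lemma norm_congruence_step_le:
  fixes G Q :: "real^'n^'n"
  assumes "0 \<le> a"
  defines "\<delta> \<equiv> norm (transpose G ** G - mat 1)"
  shows "norm (transpose G ** (mat 1 - a *\<^sub>R Q) ** G - mat 1) \<le> \<delta> + a * ((1 + \<delta>) * norm Q)"
proof -
  have "transpose G ** (mat 1 - a *\<^sub>R Q) ** G = transpose G ** G - a *\<^sub>R (transpose G ** Q ** G)"
    by (simp add: matrix_linear_simps)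
  then have "transpose G ** (mat 1 - a *\<^sub>R Q) ** G - mat 1
      = (transpose G ** G - mat 1) - a *\<^sub>R (transpose G ** Q ** G)"
    by (simp add: algebra_simps)
  then have "norm (transpose G ** (mat 1 - a *\<^sub>R Q) ** G - mat 1)
      \<le> \<delta> + norm (a *\<^sub>R (transpose G ** Q ** G))"
    unfolding \<delta>_def by (metis norm_triangle_ineq4)
  also have "\<dots> = \<delta> + a * norm (transpose G ** Q ** G)" using \<open>0 \<le> a\<close> by simp
  also have "\<dots> \<le> \<delta> + a * ((1 + \<delta>) * norm Q)"
    using norm_congruence_le[OF norm_matrix_vector_mult_sq_le_gram, of G Q] \<open>0 \<le> a\<close>
    unfolding \<delta>_def by (intro add_left_mono mult_left_mono) auto
  finally show ?thesis .
qed

definition ln_excess :: "real \<Rightarrow> real" where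
  "ln_excess m = ln m - (m - 1) / m"

lemma ln_excess_nonneg: "0 < m \<Longrightarrow> 0 \<le> ln_excess m"
  using ln_le_minus_one[of "1 / m"] unfolding ln_excess_def by (simp add: ln_div field_simps)

lemma has_real_derivative_ln_excess: "0 < x \<Longrightarrow> (ln_excess has_real_derivative (x - 1) / x\<^sup>2) (at x)"
  unfolding ln_excess_def
  by (rule derivative_eq_intros refl | simp)+ (simp add: field_simps power2_eq_square)

lemma ln_excess_mono:
  assumes "1 \<le> a" "a \<le> b"
  shows "ln_excess a \<le> ln_excess b"
proof (rule DERIV_nonneg_imp_nondecreasing[OF assms(2)])
  fix x assume "a \<le> x" "x \<le> b"
  then show "\<exists>y. (ln_excess has_real_derivative y) (at x) \<and> 0 \<le> y"
    using assms has_real_derivative_ln_excess[of x] by force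
qed

text \<open>Near \<open>1\<close> the excess is quadratic: \<open>ln_excess m - (m - 1)\<^sup>2 / 6\<close> has derivative
  \<open>(m - 1) (3 - m\<^sup>2) / (3 m\<^sup>2)\<close>, which has the sign of \<open>m - 1\<close> for \<open>m\<^sup>2 \<le> 3\<close>.\<close>

lemma ln_excess_ge_quadratic:
  assumes m: "0 < m" "m \<le> 17/10"
  shows "(m - 1)\<^sup>2 / 6 \<le> ln_excess m"
proof -
  define \<phi> where "\<phi> x = ln_excess x - (x - 1)\<^sup>2 / 6" for x
  have der: "(\<phi> has_real_derivative (x - 1) * (3 - x\<^sup>2) / (3 * x\<^sup>2)) (at x)" if "0 < x" for x
  proof -
    have "(\<phi> has_real_derivative (x - 1) / x\<^sup>2 - 2 * (x - 1) / 6) (at x)"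
      unfolding \<phi>_def
      by (intro DERIV_diff has_real_derivative_ln_excess[OF that]) (auto intro!: derivative_eq_intros)
    moreover have "(x - 1) / x\<^sup>2 - 2 * (x - 1) / 6 = (x - 1) * (3 - x\<^sup>2) / (3 * x\<^sup>2)"
      using that by (simp add: field_simps power2_eq_square)
    ultimately show ?thesis by simp
  qed
  have "\<phi> 1 \<le> \<phi> m"
  proof (cases "m \<le> 1")
    case True
    show ?thesis
    proof (rule DERIV_nonpos_imp_nonincreasing[OF True])
      fix x assume x: "m \<le> x" "x \<le> 1"
      then have "0 < x" "x\<^sup>2 \<le> 1" using m by (auto simp: abs_le_iff power_le_one)
      then have "(x - 1) * (3 - x\<^sup>2) / (3 * x\<^sup>2) \<le> 0"
        using x by (intro divide_nonpos_pos mult_nonpos_nonneg) auto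
      then show "\<exists>y. (\<phi> has_real_derivative y) (at x) \<and> y \<le> 0" using der[OF \<open>0 < x\<close>] by blast
    qed
  next
    case False
    show ?thesis
    proof (rule DERIV_nonneg_imp_nondecreasing[of 1 m])
      fix x assume x: "1 \<le> x" "x \<le> m"
      then have "x\<^sup>2 \<le> (17/10)\<^sup>2" using m by (intro power_mono) auto
      then have "0 \<le> (x - 1) * (3 - x\<^sup>2) / (3 * x\<^sup>2)"
        using x by (intro divide_nonneg_nonneg mult_nonneg_nonneg) (auto simp: power2_eq_square)
      then show "\<exists>y. (\<phi> has_real_derivative y) (at x) \<and> 0 \<le> y" using der[of x] x by auto
    qed (use False in simp)
  qed
  then show ?thesis unfolding \<phi>_def ln_excess_def by simp
qed

lemma ln_excess_ge_17_10: "17/10 \<le> m \<Longrightarrow> 49/600 \<le> ln_excess m"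
  using ln_excess_mono[of "17/10" m] ln_excess_ge_quadratic[of "17/10"] by (simp add: power2_eq_square)

lemma sum_sq_le_sum_ln_excess:
  fixes \<mu> :: "'n::finite \<Rightarrow> real"
  assumes pos: "\<And>i. 0 < \<mu> i" and small: "(\<Sum>i\<in>UNIV. ln_excess (\<mu> i)) < 49/600"
  shows "(\<Sum>i\<in>UNIV. (\<mu> i - 1)\<^sup>2) \<le> 6 * (\<Sum>i\<in>UNIV. ln_excess (\<mu> i))"
  unfolding sum_distrib_left
proof (rule sum_mono)
  fix i
  have "ln_excess (\<mu> i) \<le> (\<Sum>j\<in>UNIV. ln_excess (\<mu> j))"
    by (rule member_le_sum) (auto intro: ln_excess_nonneg pos)
  then have "\<mu> i < 17/10" using ln_excess_ge_17_10[of "\<mu> i"] small by fastforce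
  then show "(\<mu> i - 1)\<^sup>2 \<le> 6 * ln_excess (\<mu> i)" using ln_excess_ge_quadratic[of "\<mu> i"] pos[of i] by simp
qed

lemma neg_ln_one_minus_le:
  fixes a :: real
  assumes "0 \<le> a" "a < 1"
  shows "- ln (1 - a) \<le> a / (1 - a)"
  using ln_le_minus_one[of "1 / (1 - a)"] assms by (simp add: ln_div field_simps)

lemma cubic_le_32_27:
  fixes d s :: real
  assumes "0 \<le> d" "0 \<le> s" "d + s \<le> 1"
  shows "d * (1 + s)\<^sup>2 \<le> 32/27"
proof -
  have "d * (1 + s)\<^sup>2 \<le> d * (2 - d)\<^sup>2" using assms by (intro mult_left_mono power_mono) auto
  also have "\<dots> = 32/27 - (d - 2/3)\<^sup>2 * (8/3 - d)" by (simp add: power2_eq_square algebra_simps)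
  also have "\<dots> \<le> 32/27" using assms by simp
  finally show ?thesis .
qed

lemma nine_le_dim_cube:
  fixes N :: nat and p :: real
  assumes "2 \<le> N" "0 \<le> p" "2 / (real N + 1) \<le> p\<^sup>2"
  shows "9 \<le> (real N - 1) * (sqrt (real N) + p)^3"
proof (cases "N = 2")
  case True
  have "(4/5)\<^sup>2 \<le> p\<^sup>2" using assms True by (simp add: power2_eq_square)
  then have "4/5 \<le> p" using assms by (simp add: abs_le_square_iff)
  moreover have "7/5 \<le> sqrt 2" by (rule real_le_rsqrt) (simp add: power2_eq_square)
  ultimately have "(11/5)^3 \<le> (sqrt 2 + p)^3" by (intro power_mono) auto
  then show ?thesis using True by (simp add: power3_eq_cube)
next
  case False
  then have "3 \<le> N" using assms by simp
  then have "17/10 \<le> sqrt (real N)" by (intro real_le_rsqrt) (simp add: power2_eq_square)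
  then have "(17/10)^3 \<le> (sqrt (real N) + p)^3" using assms by (intro power_mono) auto
  moreover have "2 \<le> real N - 1" using \<open>3 \<le> N\<close> by simp
  ultimately have "2 * (17/10)^3 \<le> (real N - 1) * (sqrt (real N) + p)^3" by (intro mult_mono) auto
  then show ?thesis by (simp add: power3_eq_cube)
qed

lemma neg_ln_one_minus_cube_le:
  fixes r :: real
  assumes "0 < r" "r \<le> 5/12"
  shows "r^3 \<le> 125/1728" and "- ln (1 - r^3) \<le> 10/9 * r^3"
proof -
  have "r^3 \<le> (5/12)^3" using assms by (intro power_mono) auto
  moreover have "(5/12::real)^3 = 125/1728" by (simp add: power3_eq_cube)
  ultimately show r3: "r^3 \<le> 125/1728" by simp
  have "- ln (1 - r^3) \<le> r^3 / (1 - r^3)" using assms r3 by (intro neg_ln_one_minus_le) auto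
  also have "\<dots> \<le> r^3 / (9/10)" using assms r3 by (intro divide_left_mono) auto
  finally show "- ln (1 - r^3) \<le> 10/9 * r^3" by simp
qed

text \<open>The elementary estimates behind the threshold \<open>\<epsilon>\<^sub>c\<^sup>*\<close>: with \<open>r = (p - s) / (\<surd>N + p)\<close> one has
  \<open>r \<le> 5/12\<close>, hence \<open>-ln (1 - r\<^sup>3) \<le> 10/9 r\<^sup>3\<close>, and \<open>(N - 1) (\<surd>N + p)\<^sup>3 \<ge> 9\<close> absorbs the
  remaining factors.\<close>

lemma small_ln_gap_bounds:
  fixes N :: nat and g p s :: real
  assumes N: "2 \<le> N" and sp: "0 < s" "s < p" "p \<le> 1" "2 / (real N + 1) \<le> p\<^sup>2"
    and g: "0 \<le> g" "(real N - 1) * g \<le> - ln (1 - ((p - s) / (sqrt (real N) + p))^3)"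
  shows "g < 49/600" and "6 * g * (1 + s)\<^sup>2 < (p - s)\<^sup>2"
proof -
  define d where "d = p - s"
  define E where "E = sqrt (real N) + p"
  define r where "r = d / E"
  have d: "0 < d" "d \<le> p" using sp unfolding d_def by auto
  have E: "0 < E" unfolding E_def using sp by (simp add: add_nonneg_pos)
  have N1: "1 \<le> real N - 1" using N by simp
  have "7/5 \<le> sqrt (real N)" using N by (intro real_le_rsqrt) (simp add: power2_eq_square)
  then have "12 * d \<le> 5 * E" unfolding E_def distrib_left using sp d by linarith
  then have r_le: "r \<le> 5/12" unfolding r_def using E by (simp add: divide_le_eq mult.commute)
  have r_pos: "0 < r" unfolding r_def using d E by simp
  have gN: "(real N - 1) * g \<le> 10/9 * r^3"
    using g(2) neg_ln_one_minus_cube_le[OF r_pos r_le] unfolding r_def d_def E_def by linarith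
  have "g \<le> (real N - 1) * g" using N1 g(1) by (simp add: mult_le_cancel_right1)
  then show "g < 49/600" using gN neg_ln_one_minus_cube_le(1)[OF r_pos r_le] by linarith
  have "6 * g * (1 + s)\<^sup>2 * ((real N - 1) * E^3) = 6 * ((real N - 1) * g) * (1 + s)\<^sup>2 * E^3"
    by (simp add: algebra_simps)
  also have "\<dots> \<le> 6 * (10/9 * r^3) * (1 + s)\<^sup>2 * E^3"
    using gN E by (intro mult_right_mono mult_left_mono) auto
  also have "\<dots> = 20/3 * d\<^sup>2 * (d * (1 + s)\<^sup>2)"
    unfolding r_def using E by (simp add: field_simps power3_eq_cube power2_eq_square)
  also have "\<dots> \<le> 20/3 * d\<^sup>2 * (32/27)"
    using cubic_le_32_27[of d s] d sp unfolding d_def by (intro mult_left_mono) auto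
  also have "\<dots> < d\<^sup>2 * 9" using d by simp
  also have "\<dots> \<le> d\<^sup>2 * ((real N - 1) * E^3)"
    using nine_le_dim_cube[OF N, of p] sp unfolding E_def by (intro mult_left_mono) auto
  finally show "6 * g * (1 + s)\<^sup>2 < (p - s)\<^sup>2"
    unfolding d_def using mult_less_cancel_right_pos[of "(real N - 1) * E^3"] N1 E by simp
qed

lemma sum_ln_segment_max_imp_critical:
  fixes \<mu> :: "'n::finite \<Rightarrow> real"
  assumes pos: "\<And>i. 0 < \<mu> i"
    and max: "\<And>y. (\<forall>i. 0 < (1 - y) * \<mu> i + y) \<Longrightarrow>
                (\<Sum>i\<in>UNIV. ln ((1 - y) * \<mu> i + y)) \<le> (\<Sum>i\<in>UNIV. ln (\<mu> i))"
  shows "(\<Sum>i\<in>UNIV. (1 - \<mu> i) / \<mu> i) = 0"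
proof -
  define f where "f y = (\<Sum>i\<in>UNIV. ln ((1 - y) * \<mu> i + y))" for y
  have "\<forall>\<^sub>F y in nhds 0. \<forall>i. 0 < (1 - y) * \<mu> i + y"
  proof (rule eventually_all_finite)
    fix i
    have "((\<lambda>y. (1 - y) * \<mu> i + y) \<longlongrightarrow> (1 - 0) * \<mu> i + 0) (nhds 0)"
      by (intro tendsto_intros filterlim_ident)
    then have "((\<lambda>y. (1 - y) * \<mu> i + y) \<longlongrightarrow> \<mu> i) (nhds 0)" by simp
    then show "\<forall>\<^sub>F y in nhds 0. 0 < (1 - y) * \<mu> i + y" using pos by (rule order_tendstoD)
  qed
  then obtain d where "0 < d" and d: "\<And>y. dist y 0 < d \<Longrightarrow> \<forall>i. 0 < (1 - y) * \<mu> i + y"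
    unfolding eventually_nhds_metric by blast
  have "f y \<le> f 0" if "\<bar>0 - y\<bar> < d" for y
    using max[OF d] that unfolding f_def by (simp add: dist_real_def)
  moreover have "(f has_real_derivative (\<Sum>i\<in>UNIV. (1 - \<mu> i) / \<mu> i)) (at 0)"
    unfolding f_def using pos by (auto intro!: derivative_eq_intros)
  ultimately show ?thesis using DERIV_local_max \<open>0 < d\<close> by blast
qed

lemma eigenvalue_deviation_bound:
  fixes \<mu> :: "'n::finite \<Rightarrow> real"
  assumes pos: "\<And>i. 0 < \<mu> i" and crit: "(\<Sum>i\<in>UNIV. (1 - \<mu> i) / \<mu> i) = 0"
    and gap: "(real CARD('n) - 1) * (\<Sum>i\<in>UNIV. ln (\<mu> i))
              \<le> - ln (1 - ((p - s) / (sqrt (real CARD('n)) + p))^3)"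
    and sp: "0 < s" "s < p" "p \<le> 1" "2 / (real CARD('n) + 1) \<le> p\<^sup>2"
  shows "sqrt (\<Sum>i\<in>UNIV. (\<mu> i - 1)\<^sup>2) * (1 + s) < p - s"
proof -
  define g where "g = (\<Sum>i\<in>UNIV. ln_excess (\<mu> i))"
  have "(\<Sum>i\<in>UNIV. ln (\<mu> i)) = g + (\<Sum>i\<in>UNIV. (\<mu> i - 1) / \<mu> i)"
    unfolding g_def ln_excess_def by (simp add: sum_subtractf)
  also have "(\<Sum>i\<in>UNIV. (\<mu> i - 1) / \<mu> i) = - (\<Sum>i\<in>UNIV. (1 - \<mu> i) / \<mu> i)"
    by (simp add: sum_negf[symmetric] minus_divide_left)
  finally have g_eq: "(\<Sum>i\<in>UNIV. ln (\<mu> i)) = g" using crit by simp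
  have "(\<Sum>i\<in>UNIV. (\<mu> i - 1)\<^sup>2) * (1 + s)\<^sup>2 < (p - s)\<^sup>2"
  proof (cases "CARD('n) = 1")
    case True
    then obtain i0 where U: "(UNIV::'n set) = {i0}" by (rule card_1_singletonE)
    have "(\<Sum>i\<in>UNIV. (1 - \<mu> i) / \<mu> i) = (1 - \<mu> i0) / \<mu> i0" unfolding U by simp
    then have "\<mu> i0 = 1" using crit pos[of i0] by simp
    then have "(\<Sum>i\<in>UNIV. (\<mu> i - 1)\<^sup>2) = 0" unfolding U by simp
    then show ?thesis using sp by simp
  next
    case False
    then have N: "2 \<le> CARD('n)" using zero_less_card_finite[where 'a='n] by linarith
    have "0 \<le> g" unfolding g_def by (intro sum_nonneg ln_excess_nonneg pos)
    note bounds = small_ln_gap_bounds[OF N sp this gap[unfolded g_eq]]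
    have "(\<Sum>i\<in>UNIV. (\<mu> i - 1)\<^sup>2) * (1 + s)\<^sup>2 \<le> 6 * g * (1 + s)\<^sup>2"
      using sum_sq_le_sum_ln_excess[OF pos bounds(1)[unfolded g_def]] unfolding g_def
      by (intro mult_right_mono) auto
    then show ?thesis using bounds(2) by linarith
  qed
  then have "sqrt ((\<Sum>i\<in>UNIV. (\<mu> i - 1)\<^sup>2) * (1 + s)\<^sup>2) < sqrt ((p - s)\<^sup>2)"
    by (rule real_sqrt_less_mono)
  then show ?thesis using sp by (simp add: real_sqrt_mult)
qed

section \<open>Diagonal dominance near the identity\<close>

lemma sym_mat_entry: "sym_mat Z \<Longrightarrow> Z$i$j = Z$j$i"
  unfolding sym_mat_def by (metis transpose_def vec_lambda_beta)

lemma row_deviation_le_norm_diff_id: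
  fixes Z :: "real^'n^'n"
  assumes sym: "sym_mat Z"
  shows "(1 - Z$i$i)\<^sup>2 + 2 * (\<Sum>j\<in>UNIV-{i}. (Z$i$j)\<^sup>2) \<le> (norm (Z - mat 1))\<^sup>2"
proof -
  define F where "F k l = ((Z - mat 1)$k$l)\<^sup>2" for k l
  have row_i: "(\<Sum>l\<in>UNIV. F i l) = (1 - Z$i$i)\<^sup>2 + (\<Sum>j\<in>UNIV-{i}. (Z$i$j)\<^sup>2)"
  proof -
    have "(\<Sum>l\<in>UNIV-{i}. F i l) = (\<Sum>j\<in>UNIV-{i}. (Z$i$j)\<^sup>2)"
      unfolding F_def by (rule sum.cong) (auto simp: mat_def)
    moreover have "F i i = (1 - Z$i$i)\<^sup>2" unfolding F_def by (simp add: mat_def power2_commute)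
    ultimately show ?thesis using sum.remove[of UNIV i "F i"] by simp
  qed
  have column_i: "(\<Sum>j\<in>UNIV-{i}. (Z$i$j)\<^sup>2) \<le> (\<Sum>k\<in>UNIV-{i}. \<Sum>l\<in>UNIV. F k l)"
  proof (rule sum_mono)
    fix k assume k: "k \<in> UNIV - {i}"
    have "(Z$i$k)\<^sup>2 = F k i" unfolding F_def using k by (simp add: mat_def sym_mat_entry[OF sym, of i k])
    also have "\<dots> \<le> (\<Sum>l\<in>UNIV. F k l)" by (rule member_le_sum) (auto simp: F_def)
    finally show "(Z$i$k)\<^sup>2 \<le> (\<Sum>l\<in>UNIV. F k l)" .
  qed
  have "(norm (Z - mat 1))\<^sup>2 = (\<Sum>l\<in>UNIV. F i l) + (\<Sum>k\<in>UNIV-{i}. \<Sum>l\<in>UNIV. F k l)"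
    unfolding norm_matrix_sq F_def by (rule sum.remove) simp_all
  then show ?thesis using row_i column_i by simp
qed

text \<open>Here \<open>a = 1 - Z\<^sub>i\<^sub>i\<close>, and \<open>S\<close> and \<open>T\<close> are the sum of the absolute values and the sum
  of the squares of the \<open>n - 1\<close> off-diagonal entries of row \<open>i\<close>. If \<open>S > 1 - a\<close>,
  Cauchy-Schwarz and the energy bound combine to \<open>((n + 1) a - 2)\<^sup>2 < 0\<close>.\<close>

lemma diag_dominance_arith:
  fixes a S T n :: real
  assumes n: "2 \<le> n" and E: "a\<^sup>2 + 2 * T \<le> 2 / (n + 1)" and CS: "S\<^sup>2 \<le> (n - 1) * T"
    and "0 \<le> S" "0 \<le> T"
  shows "S \<le> 1 - a"
proof (rule ccontr)
  assume "\<not> S \<le> 1 - a"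
  then have "1 - a < S" by simp
  have "2 / (n + 1) \<le> 2 / 3" using n by (intro divide_left_mono) auto
  show False
  proof (cases "1 - a \<le> 0")
    case True
    then have "1 \<le> a\<^sup>2" by (simp add: one_le_power)
    then show False using E \<open>0 \<le> T\<close> \<open>2 / (n + 1) \<le> 2 / 3\<close> by linarith
  next
    case False
    then have "(1 - a)\<^sup>2 < S\<^sup>2" using \<open>1 - a < S\<close> by (intro power_strict_mono) auto
    then have lt: "(1 - a)\<^sup>2 < (n - 1) * T" using CS by linarith
    have "(n + 1) * (a\<^sup>2 + 2 * T) \<le> (n + 1) * (2 / (n + 1))" using E n by (intro mult_left_mono) auto
    moreover have "(n + 1) * (2 / (n + 1)) = 2" using n by (simp add: field_simps)
    ultimately have "(n + 1) * a\<^sup>2 + 2 * (n + 1) * T \<le> 2" by (simp add: algebra_simps)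
    then have "(n - 1) * ((n + 1) * a\<^sup>2 + 2 * (n + 1) * T) \<le> (n - 1) * 2" using n by (intro mult_left_mono) auto
    moreover have "2 * (n + 1) * (1 - a)\<^sup>2 < 2 * (n + 1) * ((n - 1) * T)" using lt n by simp
    ultimately have "(n - 1) * (n + 1) * a\<^sup>2 + 2 * (n + 1) * (1 - a)\<^sup>2 < 2 * (n - 1)"
      by (simp add: algebra_simps)
    moreover have "(n - 1) * (n + 1) * a\<^sup>2 + 2 * (n + 1) * (1 - a)\<^sup>2 - 2 * (n - 1) = ((n + 1) * a - 2)\<^sup>2"
      by (simp add: power2_eq_square algebra_simps)
    ultimately show False using zero_le_power2[of "(n + 1) * a - 2"] by linarith
  qed
qed

lemma DD_if_norm_diff_id_le:
  fixes Z :: "real^'n^'n"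
  assumes sym: "sym_mat Z" and small: "norm (Z - mat 1) \<le> sqrt (2 / (real CARD('n) + 1))"
  shows "Z \<in> DD"
proof -
  define n where "n = real CARD('n)"
  have "(\<Sum>j\<in>UNIV - {i}. \<bar>Z$i$j\<bar>) \<le> Z$i$i" for i
  proof -
    define S where "S = (\<Sum>j\<in>UNIV - {i}. \<bar>Z$i$j\<bar>)"
    define T where "T = (\<Sum>j\<in>UNIV - {i}. (Z$i$j)\<^sup>2)"
    have "(norm (Z - mat 1))\<^sup>2 \<le> 2 / (n + 1)"
      using power_mono[OF small, of 2] unfolding n_def by simp
    then have E: "(1 - Z$i$i)\<^sup>2 + 2 * T \<le> 2 / (n + 1)"
      using row_deviation_le_norm_diff_id[OF sym, of i] unfolding T_def by linarith
    have card: "real (card (UNIV - {i})) = n - 1"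
      unfolding n_def using zero_less_card_finite[where 'a='n] by (simp add: card_Diff_singleton of_nat_diff)
    have CS: "S\<^sup>2 \<le> (n - 1) * T"
      using sum_squared_le_sum_of_squares[of "\<lambda>j. \<bar>Z$i$j\<bar>" "UNIV - {i}"]
      unfolding S_def T_def card by (simp add: mult.commute)
    show ?thesis
    proof (cases "CARD('n) = 1")
      case True
      then have e: "UNIV - {i} = {}" by (auto simp: card_1_singleton_iff) (metis UNIV_I singletonD)
      then have "S = 0" "T = 0" unfolding S_def T_def e by simp_all
      then have "\<bar>1 - Z$i$i\<bar> \<le> 1" using E True unfolding n_def by (simp add: abs_square_le_1)
      then show ?thesis using \<open>S = 0\<close> unfolding S_def by (simp add: abs_le_iff)
    next
      case False
      then have "2 \<le> n" unfolding n_def using zero_less_card_finite[where 'a='n] by linarith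
      from diag_dominance_arith[OF this E CS] show ?thesis unfolding S_def T_def by (simp add: sum_nonneg)
    qed
  qed
  then show ?thesis using sym unfolding DD_def by auto
qed

lemma diagm_congruence_entry: "(diagm a ** A ** diagm b) $ i $ j = a i * A$i$j * b j"
  by (simp add: matrix_matrix_mult_def diagm_def if_distrib if_distribR cong: if_cong)

lemma SDD_if_scaled_diag_dominance:
  fixes Z :: "real^'n^'n" and x :: "real^'n"
  assumes sym: "sym_mat Z" and pos: "\<And>i. 0 < x$i"
    and dom: "\<And>i. (\<Sum>j\<in>UNIV-{i}. \<bar>Z$i$j\<bar> * x$j) \<le> Z$i$i * x$i"
  shows "Z \<in> SDD"
proof -
  define Y where "Y = diagm (\<lambda>i. x$i) ** Z ** diagm (\<lambda>i. x$i)"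
  define D where "D = diagm (\<lambda>i. 1 / x$i)"
  have Y: "Y$i$j = x$i * Z$i$j * x$j" for i j unfolding Y_def by (rule diagm_congruence_entry)
  have "pos_diag D" unfolding pos_diag_def D_def diagm_def using pos by simp
  moreover have "Y \<in> DD"
  proof -
    have "sym_mat Y" unfolding sym_mat_def
      by (simp add: vec_eq_iff transpose_def Y sym_mat_entry[OF sym] mult.commute)
    moreover have "(\<Sum>j\<in>UNIV - {i}. \<bar>Y$i$j\<bar>) \<le> Y$i$i" for i
    proof -
      have "(\<Sum>j\<in>UNIV - {i}. \<bar>Y$i$j\<bar>) = x$i * (\<Sum>j\<in>UNIV-{i}. \<bar>Z$i$j\<bar> * x$j)"
        using pos by (simp add: Y abs_mult sum_distrib_left mult.assoc abs_of_pos)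
      also have "\<dots> \<le> x$i * (Z$i$i * x$i)" using dom pos[of i] by (intro mult_left_mono) auto
      finally show ?thesis by (simp add: Y mult.assoc)
    qed
    ultimately show ?thesis unfolding DD_def by auto
  qed
  moreover have "x$i \<noteq> 0" for i using pos[of i] by simp
  then have "Z = D ** Y ** D" unfolding D_def by (simp add: vec_eq_iff diagm_congruence_entry Y)
  ultimately show ?thesis unfolding SDD_def by blast
qed

text \<open>Matrices with nonpositive off-diagonal entries and positive definite quadratic form
  (nonsingular M-matrices) are monotone: if \<open>M x \<ge> 0\<close> componentwise, the negative part \<open>v\<close> of \<open>x\<close>
  satisfies \<open>v \<bullet> M v \<le> 0\<close>, hence \<open>v = 0\<close>.\<close>

lemma M_matrix_monotone:
  fixes M :: "real^'n^'n"
  assumes off: "\<And>i j. i \<noteq> j \<Longrightarrow> M$i$j \<le> 0" and pd_form: "\<And>v. v \<noteq> 0 \<Longrightarrow> 0 < v \<bullet> (M *v v)"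
    and Mx: "\<And>i. 0 \<le> (M *v x)$i"
  shows "0 \<le> x$i"
proof -
  define v where "v = (\<chi> i. max 0 (- x$i))"
  define xp where "xp = (\<chi> i. max 0 (x$i))"
  have "v \<bullet> (M *v xp) = (\<Sum>i\<in>UNIV. \<Sum>j\<in>UNIV. v$i * M$i$j * xp$j)"
    by (simp add: inner_vec_def matrix_vector_mult_def sum_distrib_left mult.assoc)
  also have "\<dots> \<le> 0"
  proof (intro sum_nonpos)
    fix i j
    show "v$i * M$i$j * xp$j \<le> 0"
    proof (cases "i = j")
      case False
      then have "0 \<le> v$i * xp$j" "M$i$j \<le> 0" using off unfolding v_def xp_def by auto
      then show ?thesis by (metis mult.commute mult.left_commute mult_nonneg_nonpos)
    qed (auto simp: v_def xp_def max_def)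
  qed
  moreover have "v \<bullet> (M *v x) = v \<bullet> (M *v xp) - v \<bullet> (M *v v)"
  proof -
    have "x = xp - v" unfolding xp_def v_def by (simp add: vec_eq_iff max_def)
    then show ?thesis by (simp add: matrix_vector_mult_diff_distrib inner_diff_right)
  qed
  moreover have "0 \<le> v \<bullet> (M *v x)"
  proof -
    have "0 \<le> v$i * (M *v x)$i" for i using Mx[of i] unfolding v_def by simp
    then show ?thesis by (simp add: inner_vec_def sum_nonneg)
  qed
  ultimately have "v \<bullet> (M *v v) \<le> 0" by linarith
  then have "v = 0" using pd_form by force
  then have "v$i = 0" by simp
  then show ?thesis unfolding v_def by (simp add: max_def split: if_splits)
qed

lemma positive_solution_if_M_matrix:
  fixes M :: "real^'n^'n"
  assumes off: "\<And>i j. i \<noteq> j \<Longrightarrow> M$i$j \<le> 0" and pd_form: "\<And>v. v \<noteq> 0 \<Longrightarrow> 0 < v \<bullet> (M *v v)"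
  obtains x where "\<And>i. 0 < x$i" "M *v x = (\<chi> i. 1)"
proof -
  have "inj ((*v) M)"
  proof (rule injI)
    fix y z assume "M *v y = M *v z"
    then have "(y - z) \<bullet> (M *v (y - z)) = 0" by (simp add: matrix_vector_mult_diff_distrib)
    then show "y = z" using pd_form[of "y - z"] by fastforce
  qed
  then obtain B where "B ** M = mat 1" using matrix_left_invertible_injective by blast
  then have "M ** B = mat 1" using matrix_left_right_inverse by blast
  define x where "x = B *v (\<chi> i. 1)"
  have Mx: "M *v x = (\<chi> i. 1)"
    unfolding x_def matrix_vector_mul_assoc \<open>M ** B = mat 1\<close> by simp
  then have Mx1: "(M *v x)$i = 1" for i by simp
  have x_nonneg: "0 \<le> x$i" for i using M_matrix_monotone[OF off pd_form, of x] Mx1 by simp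
  have x_pos: "0 < x$i" for i
  proof (rule ccontr)
    assume "\<not> 0 < x$i"
    then have "x$i = 0" using x_nonneg[of i] by simp
    then have "M$i$j * x$j \<le> 0" for j
      using off[of i j] x_nonneg[of j] by (cases "i = j") (auto intro: mult_nonpos_nonneg)
    then have "(M *v x)$i \<le> 0" by (simp add: matrix_vector_mult_def sum_nonpos)
    then show False using Mx by (simp add: vec_eq_iff)
  qed
  from x_pos Mx show thesis by (rule that)
qed

lemma SDD_if_norm_diff_id_less:
  fixes Z :: "real^'n^'n"
  assumes sym: "sym_mat Z" and small: "norm (Z - mat 1) < 1"
  shows "Z \<in> SDD"
proof -
  define M :: "real^'n^'n" where "M = (\<chi> i j. if i = j then Z$i$j else - \<bar>Z$i$j\<bar>)"
  have M: "M$i$j = (if i = j then Z$i$j else - \<bar>Z$i$j\<bar>)" for i j unfolding M_def by simp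
  have "(norm (M - mat 1))\<^sup>2 = (norm (Z - mat 1))\<^sup>2"
    unfolding norm_matrix_sq by (intro sum.cong refl) (auto simp: M mat_def)
  then have "norm (M - mat 1) < 1" using small by (simp add: power2_eq_iff_nonneg)
  have pd_form: "0 < v \<bullet> (M *v v)" if "v \<noteq> 0" for v
  proof -
    have "v \<bullet> (M *v v) = (norm v)\<^sup>2 + v \<bullet> ((M - mat 1) *v v)"
      by (simp add: matrix_vector_mult_diff_rdistrib inner_diff_right power2_norm_eq_inner)
    moreover have "norm (M - mat 1) * (norm v)\<^sup>2 < 1 * (norm v)\<^sup>2"
      using \<open>norm (M - mat 1) < 1\<close> that by (intro mult_strict_right_mono) auto
    ultimately show ?thesis using abs_inner_matrix_vector_mult_le[of v "M - mat 1"] by linarith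
  qed
  have off: "M$i$j \<le> 0" if "i \<noteq> j" for i j using that by (simp add: M)
  obtain x where pos: "\<And>i. 0 < x$i" and Mx: "M *v x = (\<chi> i. 1)"
    using positive_solution_if_M_matrix[OF off pd_form] by blast
  have "(\<Sum>j\<in>UNIV-{i}. \<bar>Z$i$j\<bar> * x$j) \<le> Z$i$i * x$i" for i
  proof -
    have "1 = (\<Sum>j\<in>UNIV. M$i$j * x$j)" using Mx by (simp add: vec_eq_iff matrix_vector_mult_def)
    also have "\<dots> = Z$i$i * x$i - (\<Sum>j\<in>UNIV-{i}. \<bar>Z$i$j\<bar> * x$j)"
      using sum.remove[of UNIV i "\<lambda>j. M$i$j * x$j"] by (simp add: M sum_negf)
    finally show ?thesis by linarith
  qed
  then show ?thesis by (rule SDD_if_scaled_diag_dominance[OF sym pos])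
qed

lemma in_cone_if_norm_diff_id_less:
  fixes Z :: "real^'n^'n"
  assumes K: "(K = DD \<and> \<Phi>' = 2 / (real CARD('n) + 1)) \<or> (K = SDD \<and> \<Phi>' = 1)"
    and "sym_mat Z" "norm (Z - mat 1) < sqrt \<Phi>'"
  shows "Z \<in> K"
  using K DD_if_norm_diff_id_le[of Z] SDD_if_norm_diff_id_less[of Z] assms(2,3) by auto

section \<open>The decrease step\<close>

lemma S_set_affine_combination:
  assumes "X \<in> S_set M A b C c" "Y \<in> S_set M A b C c" "psd ((1 - y) *\<^sub>R X + y *\<^sub>R Y)"
  shows "(1 - y) *\<^sub>R X + y *\<^sub>R Y \<in> S_set M A b C c"
  using assms by (simp add: S_set_def frob_inner_eq_inner inner_add_right algebra_simps)

text \<open>First-order optimality of \<open>X\<^sub>t\<close> along the line through \<open>X\<^sub>L\<close>: in the eigenbasis of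
  \<open>U\<^sup>-\<^sup>T X\<^sub>t U\<^sup>-\<^sup>1\<close> the points \<open>(1 - y) X\<^sub>t + y X\<^sub>L\<close> have eigenvalues \<open>(1 - y) \<mu>\<^sub>i + y\<close>.\<close>

lemma log_det_max_critical:
  fixes X_t X_L U V :: "real^'n^'n"
  assumes max: "\<forall>X\<in>S_set M A b C c. pd X \<longrightarrow> ln (det X) \<le> ln (det X_t)"
    and in_S: "X_t \<in> S_set M A b C c" "X_L \<in> S_set M A b C c"
    and U: "invertible U" "X_L = transpose U ** U"
    and V: "orthogonal_matrix V" "X_t = transpose U ** (V ** diagm \<mu> ** transpose V) ** U"
    and pos: "\<And>i. 0 < \<mu> i"
  shows "(\<Sum>i\<in>UNIV. (1 - \<mu> i) / \<mu> i) = 0"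
proof (rule sum_ln_segment_max_imp_critical[OF pos])
  fix y assume d_pos: "\<forall>i. 0 < (1 - y) * \<mu> i + y"
  define X where "X = (1 - y) *\<^sub>R X_t + y *\<^sub>R X_L"
  have "V ** diagm (\<lambda>i. (1 - y) * \<mu> i + y) ** transpose V
      = (1 - y) *\<^sub>R (V ** diagm \<mu> ** transpose V) + y *\<^sub>R mat 1"
    using V(1) unfolding diagm_affine orthogonal_matrix_def by (simp add: matrix_linear_simps)
  then have X: "X = transpose U ** (V ** diagm (\<lambda>i. (1 - y) * \<mu> i + y) ** transpose V) ** U"
    unfolding X_def U(2) V(2) by (simp add: matrix_linear_simps)
  have "pd X" unfolding X using d_pos V(1) U(1) by (intro pd_congruence) (simp_all add: pd_orthogonal_diag_iff)
  moreover have "X \<in> S_set M A b C c"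
    unfolding X_def using in_S \<open>pd X\<close> by (intro S_set_affine_combination) (simp_all add: X_def pd_imp_psd)
  ultimately have "ln (det X) \<le> ln (det X_t)" using max by blast
  then show "(\<Sum>i\<in>UNIV. ln ((1 - y) * \<mu> i + y)) \<le> (\<Sum>i\<in>UNIV. ln (\<mu> i))"
    unfolding X V(2) using ln_det_congruence_diag[OF V(1) U(1)] d_pos pos by simp
qed

lemma gram_deviation_bound:
  fixes X_t X_L U W :: "real^'n^'n"
  assumes max: "\<forall>X\<in>S_set M A b C c. pd X \<longrightarrow> ln (det X) \<le> ln (det X_t)"
    and in_S: "X_t \<in> S_set M A b C c" "X_L \<in> S_set M A b C c"
    and U: "invertible U" "X_L = transpose U ** U" and W: "pd W" "X_t = transpose U ** W ** U"
    and gap: "(real CARD('n) - 1) * (ln (det X_t) - ln (det X_L))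
              \<le> - ln (1 - ((p - s) / (sqrt (real CARD('n)) + p))^3)"
    and sp: "0 < s" "s < p" "p \<le> 1" "2 / (real CARD('n) + 1) \<le> p\<^sup>2"
  shows "norm (W - mat 1) * (1 + s) < p - s"
proof -
  obtain V \<mu> where V: "orthogonal_matrix V" and W_eq: "W = V ** diagm \<mu> ** transpose V"
    using sym_mat_orthogonally_diagonalizable W(1) unfolding pd_def by blast
  have pos: "\<And>i. 0 < \<mu> i" using W(1) pd_orthogonal_diag_iff[OF V] unfolding W_eq by blast
  note X_t = W(2)[unfolded W_eq]
  have crit: "(\<Sum>i\<in>UNIV. (1 - \<mu> i) / \<mu> i) = 0"
    by (rule log_det_max_critical[OF max in_S U V X_t pos])
  have "ln (det X_t) - ln (det X_L) = (\<Sum>i\<in>UNIV. ln (\<mu> i))"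
    unfolding X_t U(2) ln_det_congruence_diag[OF V U(1) pos] by simp
  then have "sqrt (\<Sum>i\<in>UNIV. (\<mu> i - 1)\<^sup>2) * (1 + s) < p - s"
    using eigenvalue_deviation_bound[OF pos crit _ sp] gap by simp
  moreover have "W - mat 1 = V ** diagm (\<lambda>i. 1 * \<mu> i + - 1) ** transpose V"
    using V unfolding W_eq diagm_affine orthogonal_matrix_def by (simp add: matrix_linear_simps)
  then have "norm (W - mat 1) = sqrt (\<Sum>i\<in>UNIV. (\<mu> i - 1)\<^sup>2)"
    using norm_diagm_sq[of "\<lambda>i. 1 * \<mu> i + - 1"] norm_orthogonal_congruence[OF V]
    by (simp add: real_sqrt_unique)
  ultimately show ?thesis by simp
qed

lemma congruence_deviation_less:
  fixes G Q :: "real^'n^'n"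
  assumes "0 \<le> a" "a * norm Q \<le> s" "norm (transpose G ** G - mat 1) * (1 + s) < p - s"
  shows "norm (transpose G ** (mat 1 - a *\<^sub>R Q) ** G - mat 1) < p"
proof -
  define \<delta> where "\<delta> = norm (transpose G ** G - mat 1)"
  have "norm (transpose G ** (mat 1 - a *\<^sub>R Q) ** G - mat 1) \<le> \<delta> + (1 + \<delta>) * (a * norm Q)"
    using norm_congruence_step_le[OF assms(1), of G Q] unfolding \<delta>_def by (simp add: algebra_simps)
  also have "\<dots> \<le> \<delta> + (1 + \<delta>) * s" using assms(2) unfolding \<delta>_def by (intro add_left_mono mult_left_mono) auto
  also have "\<dots> < p" using assms(3) unfolding \<delta>_def by (simp add: algebra_simps)
  finally show ?thesis .
qed

lemma congruence_step_in_cone: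
  fixes U V Q :: "real^'n^'n"
  defines "G \<equiv> U ** matrix_inv V"
  assumes V: "invertible V" and Q: "sym_mat Q" and a: "0 \<le> a" "a * norm Q \<le> s"
    and K: "(K = DD \<and> \<Phi>' = 2 / (real CARD('n) + 1)) \<or> (K = SDD \<and> \<Phi>' = 1)"
    and gram: "norm (transpose G ** G - mat 1) * (1 + s) < sqrt \<Phi>' - s"
  obtains Y where "Y \<in> K" "transpose U ** (mat 1 - a *\<^sub>R Q) ** U = transpose V ** Y ** V"
proof -
  have "sym_mat (mat 1 - a *\<^sub>R Q)"
    using Q unfolding sym_mat_def by (simp add: transpose_diff transpose_scalar)
  then have "sym_mat (transpose G ** (mat 1 - a *\<^sub>R Q) ** G)" by (rule sym_mat_congruence)
  from K this congruence_deviation_less[OF a gram]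
  have "transpose G ** (mat 1 - a *\<^sub>R Q) ** G \<in> K" by (rule in_cone_if_norm_diff_id_less)
  moreover have "transpose U ** (mat 1 - a *\<^sub>R Q) ** U
      = transpose V ** (transpose G ** (mat 1 - a *\<^sub>R Q) ** G) ** V"
    unfolding G_def by (rule congruence_change_of_factor[OF V])
  ultimately show thesis by (rule that)
qed

theorem theorem4p14:
  fixes C X_t X_L U_t U_L :: "real^('n::{finite,linorder})^('n::{finite,linorder})"
    and A :: "nat \<Rightarrow> real^('n::{finite,linorder})^('n::{finite,linorder})" and b :: "nat \<Rightarrow> real" and M :: nat
    and c eps_C \<Phi> \<Phi>' :: real and K :: "(real^('n::{finite,linorder})^('n::{finite,linorder})) set"
  defines "N \<equiv> CARD('n)"
  assumes symC: "sym_mat C" and symA: "\<forall>i<M. sym_mat (A i)"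
    and orthA: "\<forall>i<M. \<forall>j<M. i \<noteq> j \<longrightarrow> frob_inner (A i) (A j) = 0"
    and orthC: "\<forall>i<M. frob_inner (A i) C = 0"
    and normC: "frob_norm C = 1" and normA: "\<forall>i<M. frob_norm (A i) = 1"
    and strict_feas: "\<exists>X\<in>S_set M A b C c. pd X"
    and Xt_in: "X_t \<in> S_set M A b C c" and Xt_pd: "pd X_t"
    and Xt_max: "\<forall>X\<in>S_set M A b C c. pd X \<longrightarrow> ln (det X) \<le> ln (det X_t)"
    and XL_in: "X_L \<in> S_set M A b C c" and XL_pd: "pd X_L"
    and eps_opt: "eps_C \<ge> (real N - 1) * (ln (det X_t) - ln (det X_L))"
    and eps_nonneg: "(real N - 1) * (ln (det X_t) - ln (det X_L)) \<ge> 0"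
    and Ut: "cholesky_factor U_t X_t" and UL: "cholesky_factor U_L X_L"
    and K: "(K = DD \<and> \<Phi>' = 2 / (real N + 1)) \<or> (K = SDD \<and> \<Phi>' = 1)"
    and Phi: "0 < \<Phi>" "\<Phi> < \<Phi>'"
    and eps_small: "eps_C \<le> - ln (1 - ((sqrt \<Phi>' - sqrt \<Phi>) / (sqrt (real N) + sqrt \<Phi>')) ^ 3)"
  shows
    "let Q = transpose (matrix_inv U_t) ** C ** matrix_inv U_t;
         Yhat = mat 1 - (sqrt \<Phi> / frob_norm Q) *\<^sub>R Q;
         Xhat = transpose U_t ** Yhat ** U_t
     in Inf ((\<lambda>X. ereal (frob_inner C X)) `
              {X. (\<forall>i<M. frob_inner (A i) X = b i) \<and> (\<exists>Y\<in>K. X = transpose U_L ** Y ** U_L)})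
        \<le> ereal (frob_inner C Xhat)"
proof -
  have X_t: "X_t = transpose U_t ** U_t" and X_L: "X_L = transpose U_L ** U_L"
    using Ut UL unfolding cholesky_factor_def by auto
  have inv_t: "invertible U_t" and inv_L: "invertible U_L"
    using invertible_if_pd_gram Xt_pd XL_pd unfolding X_t X_L by auto
  define Q where "Q = transpose (matrix_inv U_t) ** C ** matrix_inv U_t"
  define a where "a = sqrt \<Phi> / frob_norm Q"
  define G where "G = U_t ** matrix_inv U_L"
  have "transpose U_t ** (mat 1 - a *\<^sub>R Q) ** U_t = X_t - a *\<^sub>R C"
    using congruence_matrix_inv_cancel[OF inv_t, of C] unfolding Q_def X_t by (simp add: matrix_linear_simps)
  then have constraints: "\<forall>i<M. frob_inner (A i) (transpose U_t ** (mat 1 - a *\<^sub>R Q) ** U_t) = b i"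
    using Xt_in orthC by (simp add: S_set_def frob_inner_eq_inner inner_diff_right)
  have \<Phi>': "0 < \<Phi>'" "\<Phi>' \<le> 1" "2 / (real N + 1) \<le> \<Phi>'" using K Phi by (auto simp: N_def)
  have gram: "norm (transpose G ** G - mat 1) * (1 + sqrt \<Phi>) < sqrt \<Phi>' - sqrt \<Phi>"
  proof (rule gram_deviation_bound[OF Xt_max Xt_in XL_in inv_L X_L])
    show "pd (transpose G ** G)"
      using pd_congruence[OF invertible_mult[OF inv_t invertible_matrix_inv[OF inv_L]] pd_mat_1]
      unfolding G_def by simp
    show "X_t = transpose U_L ** (transpose G ** G) ** U_L"
      using congruence_change_of_factor[OF inv_L, of U_t "mat 1"] unfolding X_t G_def by simp
  qed (use eps_opt eps_small Phi \<Phi>' in \<open>auto simp: N_def real_sqrt_less_iff\<close>)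
  have a: "0 \<le> a" "a * norm Q \<le> sqrt \<Phi>"
    unfolding a_def frob_norm_eq_norm using Phi by (simp, cases "Q = 0", auto)
  have "sym_mat Q" using symC unfolding Q_def by (rule sym_mat_congruence)
  then obtain Y where "Y \<in> K" "transpose U_t ** (mat 1 - a *\<^sub>R Q) ** U_t = transpose U_L ** Y ** U_L"
    using congruence_step_in_cone[OF inv_L _ a K[unfolded N_def] gram[unfolded G_def]] by blast
  then show ?thesis
    using constraints unfolding Let_def a_def Q_def by (intro Inf_lower) blast
qed

end
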